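(* Let $R$ be a finite commutative chain ring with maximal ideal $\langle a\rangle$, $a$ of nilpotency index $t$, residue field $\mathbb F_q$; let $t_i(X_i)$, $I$, $A$ be as in the context, let $\mathcal K$ be a semisimple code in $A$, and let $G_0,\dots,G_t\in R[X_1,\dots,X_r]$ be an admissible family for $\mathcal K$. Let $\mathcal L$ be the code $\langle\bar G_1,\dots,\bar G_t\rangle+\bar I$ in $\mathbb F_q[X_1,\dots,X_r]/\bar I$, where $\bar I=\langle\bar t_1(X_1),\dots,\bar t_r(X_r)\rangle$. Then $d(\mathcal K)=d(\mathcal L)$.
   Context: Bars denote reduction mod $\langle a\rangle$, coefficientwise on polynomials. For $i=1,\dots,r$, $t_i(X_i)\in R[X_i]$ is monic with $\bar t_i$ square-free; $I=\langle t_1(X_1),\dots,t_r(X_r)\rangle$, $A=R[X_1,\dots,X_r]/I$. A semisimple code is an ideal of $A$. $A$ is a free $R$-module with basis the monomials $X_1^{i_1}\cdots X_r^{i_r}$, $0\le i_k<\deg t_k$, and elements are identified with their coefficient vectors in $R^n$, $n=\prod_k\deg t_k$ (similarly for $\mathbb F_q[X_1,\dots,X_r]/\bar I$ over $\mathbb F_q$). The Hamming weight of a vector is its number of nonzero coordinates, and $d(\cdot)$ of a code is the minimum Hamming weight of its nonzero elements. An admissible family for $\mathcal K$ is a family $G_0,\dots,G_t$ of polynomials with $\bigcap_{i=0}^t\mathrm{Ann}_A\langle G_i+I\rangle=0$, $\mathrm{Ann}_A\langle G_i+I\rangle+\mathrm{Ann}_A\langle G_j+I\rangle=A$ for $i\ne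 j$, and $\mathcal K=\langle G_1,aG_2,\dots,a^{t-1}G_t\rangle+I$. *)

theory Defs
  imports "HOL-Library.Poly_Mapping" "HOL-Computational_Algebra.Polynomial"
          "HOL-Computational_Algebra.Squarefree"
begin

text \<open>Variable X_(k+1) of the paper is variable index k here (k < r).\<close>

type_synonym 'a mpoly = "(nat \<Rightarrow>\<^sub>0 nat) \<Rightarrow>\<^sub>0 'a"

definition mpolys :: "nat \<Rightarrow> 'a::zero mpoly set" where
  "mpolys r = {p. \<forall>m\<in>Poly_Mapping.keys p. Poly_Mapping.keys m \<subseteq> {..<r}}"

definition uni_to_mpoly :: "nat \<Rightarrow> 'a::comm_ring_1 poly \<Rightarrow> 'a mpoly" where
  "uni_to_mpoly k p = (\<Sum>j\<le>degree p. Poly_Mapping.single (Poly_Mapping.single k j) (coeff p j))"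

definition const_mpoly :: "'a::zero \<Rightarrow> 'a mpoly" where
  "const_mpoly c = Poly_Mapping.single 0 c"

definition ideal_I :: "nat \<Rightarrow> (nat \<Rightarrow> 'a::comm_ring_1 poly) \<Rightarrow> 'a mpoly set" where
  "ideal_I r ts = {\<Sum>k<r. h k * uni_to_mpoly k (ts k) | h. \<forall>k. h k \<in> mpolys r}"

text \<open>the ideal <gens 1, ..., gens t> + I (as a set of polynomials, i.e. the preimage
  of the corresponding ideal of the quotient ring)\<close>
definition gen_code :: "nat \<Rightarrow> (nat \<Rightarrow> 'a::comm_ring_1 poly) \<Rightarrow> nat \<Rightarrow> (nat \<Rightarrow> 'a mpoly) \<Rightarrow> 'a mpoly set" where
  "gen_code r ts t gens =
     {(\<Sum>i\<in>{1..t}. h i * gens i) + \<iota> | h \<iota>. (\<forall>i. h i \<in> mpolys r) \<and> \<iota> \<in> ideal_I r ts}"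

text \<open>Ann_A <G + I>, as a set of polynomials (preimage in R[X_1..X_r])\<close>
definition ann :: "nat \<Rightarrow> (nat \<Rightarrow> 'a::comm_ring_1 poly) \<Rightarrow> 'a mpoly \<Rightarrow> 'a mpoly set" where
  "ann r ts G = {f \<in> mpolys r. f * G \<in> ideal_I r ts}"

text \<open>reduced representatives: the monomials X_1^i_1...X_r^i_r with i_k < deg t_k;
  these form the standard basis of A, identifying A with R^n\<close>
definition reduced :: "nat \<Rightarrow> (nat \<Rightarrow> 'a::comm_ring_1 poly) \<Rightarrow> 'a mpoly \<Rightarrow> bool" where
  "reduced r ts p \<longleftrightarrow> (\<forall>m\<in>Poly_Mapping.keys p. Poly_Mapping.keys m \<subseteq> {..<r} \<and> (\<forall>k<r. Poly_Mapping.lookup m k < degree (ts k)))"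

definition hweight :: "'a::zero mpoly \<Rightarrow> nat" where
  "hweight p = card (Poly_Mapping.keys p)"

text \<open>minimum distance of the code C/I in A (convention: 0 for the zero code)\<close>
definition min_dist :: "nat \<Rightarrow> (nat \<Rightarrow> 'a::comm_ring_1 poly) \<Rightarrow> 'a mpoly set \<Rightarrow> nat" where
  "min_dist r ts C =
     (let W = {hweight p | p. p \<in> C \<and> p \<noteq> 0 \<and> reduced r ts p} in if W = {} then 0 else Min W)"

definition is_ideal :: "'a::comm_ring_1 set \<Rightarrow> bool" where
  "is_ideal S \<longleftrightarrow> 0 \<in> S \<and> (\<forall>x\<in>S. \<forall>y\<in>S. x + y \<in> S) \<and> (\<forall>x\<in>S. \<forall>y. y * x \<in> S)"

definition chain_ring :: "'a::comm_ring_1 itself \<Rightarrow> bool" where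
  "chain_ring _ \<longleftrightarrow> (\<forall>I J :: 'a set. is_ideal I \<and> is_ideal J \<longrightarrow> I \<subseteq> J \<or> J \<subseteq> I)"

definition principal :: "'a::comm_ring_1 \<Rightarrow> 'a set" where
  "principal a = {a * y | y. True}"

definition maximal_ideal :: "'a::comm_ring_1 set \<Rightarrow> bool" where
  "maximal_ideal M \<longleftrightarrow> is_ideal M \<and> M \<noteq> UNIV \<and>
     (\<forall>J. is_ideal J \<and> M \<subseteq> J \<longrightarrow> J = M \<or> J = UNIV)"

definition ring_hom_cl :: "('a::comm_ring_1 \<Rightarrow> 'b::comm_ring_1) \<Rightarrow> bool" where
  "ring_hom_cl f \<longleftrightarrow> f 1 = 1 \<and> (\<forall>x y. f (x + y) = f x + f y) \<and> (\<forall>x y. f (x * y) = f x * f y)"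

end

theory Submission
  imports Defs "HOL-Library.FuncSet"
begin

(* The element a^(t-1) annihilates exactly the maximal ideal <a> = ker pi, so for every
   polynomial Y the coefficient vector of a^(t-1) Y has the same support as that of pi(Y).
   The heart of the proof is the equivalence a^(t-1) Y \<in> K \<longleftrightarrow> pi(Y) \<in> L.  From right to
   left, lift a representation of pi(Y) in L to R: the error has coefficients in <a> and is
   killed by a^(t-1).  From left to right, split Y = sum_j u_j Y along elements u_j acting on A
   as 1 on <G_j> and as 0 on the other G_i (they exist by comaximality of the annihilators).
   For j >= 1, finiteness of A gives u_j \<in> <G_j> + I, so pi(u_j Y) \<in> L; for j = 0 one gets
   a^(t-1) u_0 Y \<in> I, and since the reduced monomials form an R-basis of A this forces
   pi(u_0 Y) into the ideal generated by the reduced t_k.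
   Hence every nonzero word p of L lifts to the word a^(t-1) Y of K with the same support, and
   every nonzero word c of K, multiplied by the largest power a^s with a^s c \<noteq> 0, becomes a
   word a^(t-1) Y of K with support inside that of c, so that pi(Y) is a word of L of weight at
   most that of c. *)

lemma lookup_map: "Poly_Mapping.lookup (Poly_Mapping.map f p) m =
    (if Poly_Mapping.lookup p m = 0 then 0 else f (Poly_Mapping.lookup p m))"
  by (simp add: Poly_Mapping.map.rep_eq when_def)

lemma lookup_map_of_zero: "f 0 = 0 \<Longrightarrow> Poly_Mapping.lookup (Poly_Mapping.map f p) m = f (Poly_Mapping.lookup p m)"
  by (simp add: lookup_map)

lemma keys_map_subset: "Poly_Mapping.keys (Poly_Mapping.map f p) \<subseteq> Poly_Mapping.keys p"
  by (auto simp: in_keys_iff lookup_map)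

lemma poly_mapping_sum_single:
  assumes "finite S" "Poly_Mapping.keys p \<subseteq> S"
  shows "(\<Sum>m\<in>S. Poly_Mapping.single m (Poly_Mapping.lookup p m)) = p"
proof (rule poly_mapping_eqI)
  fix k
  show "Poly_Mapping.lookup (\<Sum>m\<in>S. Poly_Mapping.single m (Poly_Mapping.lookup p m)) k = Poly_Mapping.lookup p k"
    using assms by (cases "k \<in> S") (auto simp: lookup_sum lookup_single when_def in_keys_iff)
qed

lemma lookup_const_mpoly_mult [simp]:
  "Poly_Mapping.lookup (const_mpoly c * p) m = (c::'a::comm_ring_1) * Poly_Mapping.lookup p m"
  unfolding const_mpoly_def mult_map_scale_conv_mult[symmetric] by (simp add: lookup_map_of_zero)

lemma const_mpoly_mult: "const_mpoly (c * d) = const_mpoly (c::'a::comm_ring_1) * const_mpoly d"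
  by (simp add: const_mpoly_def mult_single)

lemma const_mpoly_add: "const_mpoly (c + d) = const_mpoly (c::'a::comm_ring_1) + const_mpoly d"
  by (simp add: const_mpoly_def single_add)

lemma const_mpoly_0 [simp]: "const_mpoly 0 = 0"
  by (simp add: const_mpoly_def)

lemma const_mpoly_1 [simp]: "const_mpoly 1 = (1::'a::comm_ring_1 mpoly)"
  by (simp add: const_mpoly_def)

lemma single_eq_const_mpoly_mult: "Poly_Mapping.single m c = const_mpoly (c::'a::comm_ring_1) * Poly_Mapping.single m 1"
  by (simp add: const_mpoly_def mult_single)

lemma keys_const_mpoly_mult_subset:
  "Poly_Mapping.keys (const_mpoly (c::'a::comm_ring_1) * p) \<subseteq> Poly_Mapping.keys p"
  by (auto simp: in_keys_iff)

lemma const_mpoly_mult_eq_0_iff: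
  "const_mpoly (c::'a::comm_ring_1) * p = 0 \<longleftrightarrow> (\<forall>m. c * Poly_Mapping.lookup p m = 0)"
  by (simp only: poly_mapping_eq_iff fun_eq_iff lookup_const_mpoly_mult lookup_zero)

lemma mpolys_iff: "p \<in> mpolys r \<longleftrightarrow> (\<forall>m\<in>Poly_Mapping.keys p. Poly_Mapping.keys m \<subseteq> {..<r})"
  by (simp add: mpolys_def)

lemma mpolys_keys_subset: "Poly_Mapping.keys p \<subseteq> Poly_Mapping.keys q \<Longrightarrow> q \<in> mpolys r \<Longrightarrow> p \<in> mpolys r"
  by (auto simp: mpolys_iff)

lemma mpolys_0 [simp]: "0 \<in> mpolys r"
  by (simp add: mpolys_def)

lemma mpolys_1 [simp]: "(1::'a::comm_ring_1 mpoly) \<in> mpolys r"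
  by (simp add: mpolys_def)

lemma mpolys_const [simp]: "const_mpoly (c::'a::comm_ring_1) \<in> mpolys r"
  by (simp add: mpolys_def const_mpoly_def)

lemma mpolys_add [simp]: "p \<in> mpolys r \<Longrightarrow> q \<in> mpolys r \<Longrightarrow> p + q \<in> mpolys r"
  using keys_add[of p q] by (auto simp: mpolys_iff)

lemma mpolys_uminus [simp]: "p \<in> mpolys r \<Longrightarrow> - (p::'a::comm_ring_1 mpoly) \<in> mpolys r"
  by (simp add: mpolys_def)

lemma mpolys_diff [simp]: "p \<in> mpolys r \<Longrightarrow> q \<in> mpolys r \<Longrightarrow> p - (q::'a::comm_ring_1 mpoly) \<in> mpolys r"
  using mpolys_add[of p r "- q"] by simp

lemma mpolys_mult [simp]:
  assumes "p \<in> mpolys r" "q \<in> mpolys r"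
  shows "p * (q::'a::comm_ring_1 mpoly) \<in> mpolys r"
  unfolding mpolys_iff
proof
  fix m assume "m \<in> Poly_Mapping.keys (p * q)"
  then obtain x y where "m = x + y" "x \<in> Poly_Mapping.keys p" "y \<in> Poly_Mapping.keys q"
    using keys_mult by blast
  then show "Poly_Mapping.keys m \<subseteq> {..<r}"
    using assms keys_add[of x y] unfolding mpolys_iff by blast
qed

lemma mpolys_sum [simp]: "(\<And>i. i \<in> S \<Longrightarrow> f i \<in> mpolys r) \<Longrightarrow> sum f S \<in> mpolys r"
  by (induction S rule: infinite_finite_induct) auto

lemma mpolys_prod [simp]: "(\<And>i. i \<in> S \<Longrightarrow> f i \<in> mpolys r) \<Longrightarrow> (prod f S :: 'a::comm_ring_1 mpoly) \<in> mpolys r"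
  by (induction S rule: infinite_finite_induct) auto

lemma mpolys_power [simp]: "p \<in> mpolys r \<Longrightarrow> (p::'a::comm_ring_1 mpoly) ^ n \<in> mpolys r"
  by (induction n) auto

lemma lookup_uni_to_mpoly: "Poly_Mapping.lookup (uni_to_mpoly k p) m =
   (if m = Poly_Mapping.single k (Poly_Mapping.lookup m k) then coeff p (Poly_Mapping.lookup m k) else 0)"
proof -
  have "Poly_Mapping.lookup (uni_to_mpoly k p) m = (\<Sum>j\<le>degree p. coeff p j when Poly_Mapping.single k j = m)"
    by (simp add: uni_to_mpoly_def lookup_sum lookup_single)
  also have "\<dots> = (if m = Poly_Mapping.single k (Poly_Mapping.lookup m k) then coeff p (Poly_Mapping.lookup m k) else 0)"
  proof (cases "m = Poly_Mapping.single k (Poly_Mapping.lookup m k)")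
    case True
    define j0 where "j0 = Poly_Mapping.lookup m k"
    have eq: "(\<lambda>j. coeff p j when Poly_Mapping.single k j = m) = (\<lambda>j. if j = j0 then coeff p j else 0)"
      using True by (auto simp: when_def fun_eq_iff j0_def)
    show ?thesis
      unfolding eq using True by (simp add: j0_def[symmetric] coeff_eq_0)
  next
    case False
    then have "Poly_Mapping.single k j \<noteq> m" for j by (metis lookup_single_eq)
    with False show ?thesis by simp
  qed
  finally show ?thesis .
qed

lemma uni_to_mpoly_monom: "uni_to_mpoly k (monom c j) = Poly_Mapping.single (Poly_Mapping.single k j) c"
  by (rule poly_mapping_eqI) (auto simp: lookup_uni_to_mpoly lookup_single when_def coeff_monom)

lemma uni_to_mpoly_add: "uni_to_mpoly k (p + q) = uni_to_mpoly k p + uni_to_mpoly k q"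
  by (rule poly_mapping_eqI) (simp add: lookup_uni_to_mpoly lookup_add)

lemma uni_to_mpoly_0 [simp]: "uni_to_mpoly k 0 = 0"
  by (rule poly_mapping_eqI) (simp add: lookup_uni_to_mpoly)

lemma uni_to_mpoly_smult: "uni_to_mpoly k (smult c p) = const_mpoly c * uni_to_mpoly k p"
  by (rule poly_mapping_eqI) (simp add: lookup_uni_to_mpoly)

lemma uni_to_mpoly_sum: "uni_to_mpoly k (sum f S) = (\<Sum>i\<in>S. uni_to_mpoly k (f i))"
  by (induction S rule: infinite_finite_induct) (auto simp: uni_to_mpoly_add)

lemma uni_to_mpoly_mult: "uni_to_mpoly k (p * q) = uni_to_mpoly k p * uni_to_mpoly k (q::'a::comm_ring_1 poly)"
proof -
  have "uni_to_mpoly k (p * q) =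
      uni_to_mpoly k ((\<Sum>i\<le>degree p. monom (coeff p i) i) * (\<Sum>j\<le>degree q. monom (coeff q j) j))"
    by (simp add: poly_as_sum_of_monoms)
  also have "\<dots> = (\<Sum>i\<le>degree p. \<Sum>j\<le>degree q.
      uni_to_mpoly k (monom (coeff p i) i) * uni_to_mpoly k (monom (coeff q j) j))"
    by (simp add: sum_product uni_to_mpoly_sum mult_monom uni_to_mpoly_monom mult_single single_add)
  also have "\<dots> = uni_to_mpoly k p * uni_to_mpoly k q"
    by (simp add: sum_product[symmetric] uni_to_mpoly_sum[symmetric] poly_as_sum_of_monoms)
  finally show ?thesis .
qed

lemma keys_uni_to_mpoly:
  "m \<in> Poly_Mapping.keys (uni_to_mpoly k p) \<Longrightarrow>
   m = Poly_Mapping.single k (Poly_Mapping.lookup m k) \<and> coeff p (Poly_Mapping.lookup m k) \<noteq> 0"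
  by (auto simp: in_keys_iff lookup_uni_to_mpoly split: if_splits)

lemma mpolys_uni_to_mpoly [simp]: "k < r \<Longrightarrow> uni_to_mpoly k p \<in> mpolys r"
  unfolding mpolys_iff by (metis keys_uni_to_mpoly keys_single lessThan_iff empty_subsetI insert_subset)

section \<open>Ideals of the polynomial ring\<close>

(* The carrier type also contains polynomials in the variables r, r+1, ...; an ideal of
   R[X_0, ..., X_(r-1)] is only required to absorb multipliers from mpolys r. *)
definition mpoly_ideal :: "nat \<Rightarrow> 'a::comm_ring_1 mpoly set \<Rightarrow> bool" where
  "mpoly_ideal r S \<longleftrightarrow> 0 \<in> S \<and> (\<forall>x\<in>S. \<forall>y\<in>S. x + y \<in> S) \<and> (\<forall>g\<in>mpolys r. \<forall>x\<in>S. g * x \<in> S)"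

context
  fixes r :: nat and S :: "'a::comm_ring_1 mpoly set"
  assumes S: "mpoly_ideal r S"
begin

lemma mpoly_ideal_0: "0 \<in> S"
  using S by (simp add: mpoly_ideal_def)

lemma mpoly_ideal_add: "x \<in> S \<Longrightarrow> y \<in> S \<Longrightarrow> x + y \<in> S"
  using S by (simp add: mpoly_ideal_def)

lemma mpoly_ideal_mult_left: "g \<in> mpolys r \<Longrightarrow> x \<in> S \<Longrightarrow> g * x \<in> S"
  using S by (simp add: mpoly_ideal_def)

lemma mpoly_ideal_mult_right: "g \<in> mpolys r \<Longrightarrow> x \<in> S \<Longrightarrow> x * g \<in> S"
  using mpoly_ideal_mult_left by (simp add: mult.commute)

lemma mpoly_ideal_diff: "x \<in> S \<Longrightarrow> y \<in> S \<Longrightarrow> x - y \<in> S"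
  using mpoly_ideal_add[of x "(- 1) * y"] mpoly_ideal_mult_left[of "- 1" y] by simp

lemma mpoly_ideal_sum: "(\<And>i. i \<in> I \<Longrightarrow> f i \<in> S) \<Longrightarrow> sum f I \<in> S"
  by (induction I rule: infinite_finite_induct) (auto simp: mpoly_ideal_0 mpoly_ideal_add)

lemma mpoly_ideal_prod_diff:
  assumes "\<And>k. k \<in> A \<Longrightarrow> f k \<in> mpolys r" "\<And>k. k \<in> A \<Longrightarrow> g k \<in> mpolys r"
    and "\<And>k. k \<in> A \<Longrightarrow> f k - g k \<in> S"
  shows "prod f A - prod g A \<in> S"
  using assms
proof (induction A rule: infinite_finite_induct)
  case (insert x A)
  have "prod f (insert x A) - prod g (insert x A) = f x * (prod f A - prod g A) + (f x - g x) * prod g A"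
    using insert.hyps by (simp add: algebra_simps)
  also have "\<dots> \<in> S"
  proof (rule mpoly_ideal_add)
    show "f x * (prod f A - prod g A) \<in> S"
      using insert by (intro mpoly_ideal_mult_left) auto
    show "(f x - g x) * prod g A \<in> S"
      using insert by (intro mpoly_ideal_mult_right mpolys_prod) auto
  qed
  finally show ?case .
qed (auto simp: mpoly_ideal_0)

end

lemma ideal_I_iff:
  "x \<in> ideal_I r ts \<longleftrightarrow> (\<exists>h. (\<forall>k. h k \<in> mpolys r) \<and> x = (\<Sum>k<r. h k * uni_to_mpoly k (ts k)))"
  by (auto simp: ideal_I_def)

lemma mpoly_ideal_ideal_I: "mpoly_ideal r (ideal_I r (ts :: nat \<Rightarrow> 'a::comm_ring_1 poly))"
  unfolding mpoly_ideal_def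
proof (intro conjI ballI)
  show "0 \<in> ideal_I r ts"
    unfolding ideal_I_iff by (intro exI[of _ "\<lambda>_. 0"]) simp
next
  fix x y assume "x \<in> ideal_I r ts" "y \<in> ideal_I r ts"
  then obtain hx hy where "\<forall>k. hx k \<in> mpolys r" "x = (\<Sum>k<r. hx k * uni_to_mpoly k (ts k))"
    "\<forall>k. hy k \<in> mpolys r" "y = (\<Sum>k<r. hy k * uni_to_mpoly k (ts k))"
    unfolding ideal_I_iff by blast
  then show "x + y \<in> ideal_I r ts"
    unfolding ideal_I_iff by (intro exI[of _ "\<lambda>k. hx k + hy k"]) (simp add: sum.distrib algebra_simps)
next
  fix g x :: "'a mpoly" assume "g \<in> mpolys r" "x \<in> ideal_I r ts"
  then obtain h where "\<forall>k. h k \<in> mpolys r" "x = (\<Sum>k<r. h k * uni_to_mpoly k (ts k))"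
    unfolding ideal_I_iff by blast
  with \<open>g \<in> mpolys r\<close> show "g * x \<in> ideal_I r ts"
    unfolding ideal_I_iff by (intro exI[of _ "\<lambda>k. g * h k"]) (simp add: sum_distrib_left algebra_simps)
qed

lemma uni_to_mpoly_mem_ideal_I: "k < r \<Longrightarrow> uni_to_mpoly k (ts k) \<in> ideal_I r ts"
  unfolding ideal_I_iff
proof (intro exI[of _ "\<lambda>l. if l = k then 1 else 0"] conjI)
  assume "k < r"
  have "(\<Sum>l<r. (if l = k then 1 else 0) * uni_to_mpoly l (ts l)) = (\<Sum>l<r. if l = k then uni_to_mpoly l (ts l) else 0)"
    by (rule sum.cong) auto
  with \<open>k < r\<close> show "uni_to_mpoly k (ts k) = (\<Sum>l<r. (if l = k then 1 else 0) * uni_to_mpoly l (ts l))"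
    by simp
qed auto

lemma gen_code_iff: "x \<in> gen_code r ts t gens \<longleftrightarrow>
   (\<exists>h \<iota>. (\<forall>i. h i \<in> mpolys r) \<and> \<iota> \<in> ideal_I r ts \<and> x = (\<Sum>i\<in>{1..t}. h i * gens i) + \<iota>)"
  by (auto simp: gen_code_def)

lemma ideal_I_subset_gen_code: "x \<in> ideal_I r ts \<Longrightarrow> x \<in> gen_code r ts t gens"
  unfolding gen_code_iff by (intro exI[of _ "\<lambda>_. 0"] exI[of _ x]) simp

lemma mpoly_ideal_gen_code: "mpoly_ideal r (gen_code r ts t (gens :: nat \<Rightarrow> 'a::comm_ring_1 mpoly))"
  unfolding mpoly_ideal_def
proof (intro conjI ballI)
  show "0 \<in> gen_code r ts t gens"
    by (rule ideal_I_subset_gen_code[OF mpoly_ideal_0[OF mpoly_ideal_ideal_I]])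
next
  fix x y assume "x \<in> gen_code r ts t gens" "y \<in> gen_code r ts t gens"
  then obtain hx hy \<iota>x \<iota>y where "\<forall>i. hx i \<in> mpolys r" "\<iota>x \<in> ideal_I r ts" "x = (\<Sum>i\<in>{1..t}. hx i * gens i) + \<iota>x"
    "\<forall>i. hy i \<in> mpolys r" "\<iota>y \<in> ideal_I r ts" "y = (\<Sum>i\<in>{1..t}. hy i * gens i) + \<iota>y"
    unfolding gen_code_iff by blast
  then show "x + y \<in> gen_code r ts t gens"
    unfolding gen_code_iff
    by (intro exI[of _ "\<lambda>i. hx i + hy i"] exI[of _ "\<iota>x + \<iota>y"])
       (simp add: mpoly_ideal_add[OF mpoly_ideal_ideal_I] sum.distrib algebra_simps)
next
  fix g x :: "'a mpoly" assume "g \<in> mpolys r" "x \<in> gen_code r ts t gens"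
  then obtain h \<iota> where "\<forall>i. h i \<in> mpolys r" "\<iota> \<in> ideal_I r ts" "x = (\<Sum>i\<in>{1..t}. h i * gens i) + \<iota>"
    unfolding gen_code_iff by blast
  with \<open>g \<in> mpolys r\<close> show "g * x \<in> gen_code r ts t gens"
    unfolding gen_code_iff
    by (intro exI[of _ "\<lambda>i. g * h i"] exI[of _ "g * \<iota>"])
       (simp add: mpoly_ideal_mult_left[OF mpoly_ideal_ideal_I] distrib_left sum_distrib_left mult.assoc)
qed

lemma gen_code_generator: "j \<in> {1..t} \<Longrightarrow> g \<in> mpolys r \<Longrightarrow> g * gens j \<in> gen_code r ts t gens"
  unfolding gen_code_iff
proof (intro exI[of _ "\<lambda>i. if i = j then g else 0"] exI[of _ 0] conjI)
  assume "j \<in> {1..t}"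
  have "(\<Sum>i\<in>{1..t}. (if i = j then g else 0) * gens i) = (\<Sum>i\<in>{1..t}. if i = j then g * gens i else 0)"
    by (rule sum.cong) auto
  with \<open>j \<in> {1..t}\<close> show "g * gens j = (\<Sum>i\<in>{1..t}. (if i = j then g else 0) * gens i) + 0"
    by simp
qed (auto simp: mpoly_ideal_0[OF mpoly_ideal_ideal_I])

lemma mpoly_ideal_ann: "mpoly_ideal r (ann r ts (G :: 'a::comm_ring_1 mpoly))"
  unfolding mpoly_ideal_def ann_def
proof (intro conjI ballI)
  show "0 \<in> {f \<in> mpolys r. f * G \<in> ideal_I r ts}"
    by (simp add: mpoly_ideal_0[OF mpoly_ideal_ideal_I])
next
  fix x y assume "x \<in> {f \<in> mpolys r. f * G \<in> ideal_I r ts}" "y \<in> {f \<in> mpolys r. f * G \<in> ideal_I r ts}"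
  then show "x + y \<in> {f \<in> mpolys r. f * G \<in> ideal_I r ts}"
    by (simp add: distrib_right mpoly_ideal_add[OF mpoly_ideal_ideal_I])
next
  fix g x :: "'a mpoly" assume "g \<in> mpolys r" "x \<in> {f \<in> mpolys r. f * G \<in> ideal_I r ts}"
  then show "g * x \<in> {f \<in> mpolys r. f * G \<in> ideal_I r ts}"
    by (simp add: mult.assoc mpoly_ideal_mult_left[OF mpoly_ideal_ideal_I])
qed

lemma mult_mem_ideal_I_if_kills_generators:
  assumes u: "u \<in> mpolys r" and kills: "\<And>i. i \<in> {1..t} \<Longrightarrow> u * gens i \<in> ideal_I r ts"
    and x: "x \<in> gen_code r ts t gens"
  shows "u * x \<in> ideal_I r ts"
proof -
  obtain h \<iota> where h: "\<forall>i. h i \<in> mpolys r" "\<iota> \<in> ideal_I r ts" "x = (\<Sum>i\<in>{1..t}. h i * gens i) + \<iota>"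
    using x unfolding gen_code_iff by blast
  have "u * x = (\<Sum>i\<in>{1..t}. h i * (u * gens i)) + u * \<iota>"
    by (simp add: h(3) distrib_left sum_distrib_left mult.left_commute)
  also have "\<dots> \<in> ideal_I r ts"
    using h u
    by (intro mpoly_ideal_add[OF mpoly_ideal_ideal_I] mpoly_ideal_sum[OF mpoly_ideal_ideal_I] kills
        mpoly_ideal_mult_left[OF mpoly_ideal_ideal_I]) auto
  finally show ?thesis .
qed

lemma top_power_mult_mem_gen_code:
  assumes "x \<in> gen_code r ts t G"
  shows "const_mpoly (a ^ (t - 1)) * x \<in> gen_code r ts t (\<lambda>i. const_mpoly (a ^ (i - 1)) * G i)"
proof -
  obtain h \<iota> where h: "\<forall>i. h i \<in> mpolys r" "\<iota> \<in> ideal_I r ts" "x = (\<Sum>i\<in>{1..t}. h i * G i) + \<iota>"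
    using assms unfolding gen_code_iff by blast
  have "const_mpoly (a ^ (t - 1)) * x =
      (\<Sum>i\<in>{1..t}. const_mpoly (a ^ (t - 1)) * (h i * G i)) + const_mpoly (a ^ (t - 1)) * \<iota>"
    by (simp add: h(3) distrib_left sum_distrib_left)
  also have "(\<Sum>i\<in>{1..t}. const_mpoly (a ^ (t - 1)) * (h i * G i)) =
      (\<Sum>i\<in>{1..t}. (const_mpoly (a ^ (t - i)) * h i) * (const_mpoly (a ^ (i - 1)) * G i))"
  proof (rule sum.cong)
    fix i assume "i \<in> {1..t}"
    then have "a ^ (t - 1) = a ^ (t - i) * a ^ (i - 1)"
      by (simp flip: power_add)
    then show "const_mpoly (a ^ (t - 1)) * (h i * G i) =
        (const_mpoly (a ^ (t - i)) * h i) * (const_mpoly (a ^ (i - 1)) * G i)"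
      by (simp add: const_mpoly_mult mult_ac)
  qed simp
  also have "\<dots> + const_mpoly (a ^ (t - 1)) * \<iota> \<in> gen_code r ts t (\<lambda>i. const_mpoly (a ^ (i - 1)) * G i)"
    using h
    by (intro mpoly_ideal_add[OF mpoly_ideal_gen_code] mpoly_ideal_sum[OF mpoly_ideal_gen_code]
        gen_code_generator ideal_I_subset_gen_code mpoly_ideal_mult_left[OF mpoly_ideal_ideal_I]) simp_all
  finally show ?thesis .
qed

context
  fixes \<pi> :: "'a::comm_ring_1 \<Rightarrow> 'b::comm_ring_1"
  assumes hom: "ring_hom_cl \<pi>"
begin

lemma ring_hom_cl_add: "\<pi> (x + y) = \<pi> x + \<pi> y"
  using hom by (simp add: ring_hom_cl_def)

lemma ring_hom_cl_mult: "\<pi> (x * y) = \<pi> x * \<pi> y"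
  using hom by (simp add: ring_hom_cl_def)

lemma ring_hom_cl_1: "\<pi> 1 = 1"
  using hom by (simp add: ring_hom_cl_def)

lemma ring_hom_cl_0: "\<pi> 0 = 0"
  using ring_hom_cl_add[of 0 0] by simp

lemma ring_hom_cl_diff: "\<pi> (x - y) = \<pi> x - \<pi> y"
  using ring_hom_cl_add[of "x - y" y] by (simp add: eq_diff_eq)

lemma lookup_map_hom: "Poly_Mapping.lookup (Poly_Mapping.map \<pi> p) m = \<pi> (Poly_Mapping.lookup p m)"
  by (simp add: lookup_map_of_zero ring_hom_cl_0)

lemma poly_mapping_map_add: "Poly_Mapping.map \<pi> (p + q) = Poly_Mapping.map \<pi> p + Poly_Mapping.map \<pi> q"
  by (rule poly_mapping_eqI) (simp add: lookup_map_hom lookup_add ring_hom_cl_add)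

lemma poly_mapping_map_diff: "Poly_Mapping.map \<pi> (p - q) = Poly_Mapping.map \<pi> p - Poly_Mapping.map \<pi> q"
  by (rule poly_mapping_eqI) (simp add: lookup_map_hom lookup_minus ring_hom_cl_diff)

lemma poly_mapping_map_sum: "Poly_Mapping.map \<pi> (sum f S) = (\<Sum>i\<in>S. Poly_Mapping.map \<pi> (f i))"
  by (induction S rule: infinite_finite_induct) (auto simp: poly_mapping_map_add map_eq_zero_iff)

lemma poly_mapping_map_mult:
  "Poly_Mapping.map \<pi> (p * q) = Poly_Mapping.map \<pi> p * Poly_Mapping.map \<pi> (q :: 'c::comm_monoid_add \<Rightarrow>\<^sub>0 'a)"
proof -
  let ?expand = "\<lambda>p :: 'c \<Rightarrow>\<^sub>0 'a. \<Sum>m\<in>Poly_Mapping.keys p. Poly_Mapping.single m (Poly_Mapping.lookup p m)"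
  have "Poly_Mapping.map \<pi> (?expand p * ?expand q) = Poly_Mapping.map \<pi> (?expand p) * Poly_Mapping.map \<pi> (?expand q)"
    by (simp add: sum_product poly_mapping_map_sum mult_single ring_hom_cl_0 ring_hom_cl_mult)
  then show ?thesis
    by (simp add: poly_mapping_sum_single)
qed

lemma poly_mapping_map_uni_to_mpoly:
  "Poly_Mapping.map \<pi> (uni_to_mpoly k q) = uni_to_mpoly k (map_poly \<pi> q)"
  by (rule poly_mapping_eqI) (simp add: lookup_map_hom lookup_uni_to_mpoly coeff_map_poly ring_hom_cl_0)

lemma mpolys_map: "p \<in> mpolys r \<Longrightarrow> Poly_Mapping.map \<pi> p \<in> mpolys r"
  by (rule mpolys_keys_subset[OF keys_map_subset])

lemma map_mem_ideal_I:
  assumes "x \<in> ideal_I r ts"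
  shows "Poly_Mapping.map \<pi> x \<in> ideal_I r (\<lambda>k. map_poly \<pi> (ts k))"
proof -
  obtain h where "\<forall>k. h k \<in> mpolys r" "x = (\<Sum>k<r. h k * uni_to_mpoly k (ts k))"
    using assms unfolding ideal_I_iff by blast
  then show ?thesis
    unfolding ideal_I_iff
    by (intro exI[of _ "\<lambda>k. Poly_Mapping.map \<pi> (h k)"])
       (simp add: mpolys_map poly_mapping_map_sum poly_mapping_map_mult poly_mapping_map_uni_to_mpoly)
qed

lemma degree_map_poly_monic:
  assumes "lead_coeff p = 1"
  shows "degree (map_poly \<pi> p) = degree p"
proof (rule antisym)
  show "degree p \<le> degree (map_poly \<pi> p)"
    using assms by (intro le_degree) (simp add: coeff_map_poly ring_hom_cl_0 ring_hom_cl_1)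
qed (rule map_poly_degree_leq)

end

context
  fixes \<pi> :: "'a::zero \<Rightarrow> 'b::zero"
  assumes surj: "surj \<pi>" and zero: "\<pi> 0 = 0"
begin

lemma inv_neq_0: "c \<noteq> 0 \<Longrightarrow> inv \<pi> c \<noteq> 0"
  using zero surj_f_inv_f[OF surj, of c] by metis

lemma keys_map_inv: "Poly_Mapping.keys (Poly_Mapping.map (inv \<pi>) p) = Poly_Mapping.keys p"
  by (auto simp: in_keys_iff lookup_map inv_neq_0)

lemma map_map_inv: "Poly_Mapping.map \<pi> (Poly_Mapping.map (inv \<pi>) p) = p"
  by (rule poly_mapping_eqI) (simp add: lookup_map surj_f_inv_f[OF surj] zero inv_neq_0)

end

lemma ideal_I_map_preimage:
  assumes hom: "ring_hom_cl \<pi>" and "surj \<pi>"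
    and \<iota>: "\<iota> \<in> ideal_I r (\<lambda>k. map_poly \<pi> (ts k))"
  shows "\<exists>J\<in>ideal_I r ts. Poly_Mapping.map \<pi> J = \<iota>"
proof -
  obtain g where g: "\<forall>k. g k \<in> mpolys r" "\<iota> = (\<Sum>k<r. g k * uni_to_mpoly k (map_poly \<pi> (ts k)))"
    using \<iota> unfolding ideal_I_iff by blast
  define lift where "lift k = Poly_Mapping.map (inv \<pi>) (g k)" for k
  note inv = keys_map_inv[OF \<open>surj \<pi>\<close> ring_hom_cl_0[OF hom]] map_map_inv[OF \<open>surj \<pi>\<close> ring_hom_cl_0[OF hom]]
  have "(\<Sum>k<r. lift k * uni_to_mpoly k (ts k)) \<in> ideal_I r ts"
    unfolding ideal_I_iff using g(1) by (intro exI[of _ lift]) (simp add: mpolys_iff lift_def inv)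
  moreover have "Poly_Mapping.map \<pi> (\<Sum>k<r. lift k * uni_to_mpoly k (ts k)) = \<iota>"
    by (simp add: g(2) lift_def inv poly_mapping_map_sum[OF hom] poly_mapping_map_mult[OF hom]
        poly_mapping_map_uni_to_mpoly[OF hom])
  ultimately show ?thesis ..
qed

lemma gen_code_map_preimage:
  assumes hom: "ring_hom_cl \<pi>" and "surj \<pi>"
    and p: "p \<in> gen_code r (\<lambda>k. map_poly \<pi> (ts k)) t (\<lambda>i. Poly_Mapping.map \<pi> (G i))"
  shows "\<exists>X\<in>gen_code r ts t G. Poly_Mapping.map \<pi> X = p"
proof -
  obtain h \<iota> where h: "\<forall>i. h i \<in> mpolys r" and \<iota>: "\<iota> \<in> ideal_I r (\<lambda>k. map_poly \<pi> (ts k))"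
    and p_eq: "p = (\<Sum>i\<in>{1..t}. h i * Poly_Mapping.map \<pi> (G i)) + \<iota>"
    using p unfolding gen_code_iff by blast
  obtain J where J: "J \<in> ideal_I r ts" "Poly_Mapping.map \<pi> J = \<iota>"
    using ideal_I_map_preimage[OF hom \<open>surj \<pi>\<close> \<iota>] by blast
  define H where "H i = Poly_Mapping.map (inv \<pi>) (h i)" for i
  note inv = keys_map_inv[OF \<open>surj \<pi>\<close> ring_hom_cl_0[OF hom]] map_map_inv[OF \<open>surj \<pi>\<close> ring_hom_cl_0[OF hom]]
  have "H i \<in> mpolys r" for i
    by (rule mpolys_keys_subset[of "H i" "h i"]) (simp_all add: H_def inv h)
  then have "(\<Sum>i\<in>{1..t}. H i * G i) + J \<in> gen_code r ts t G"
    unfolding gen_code_iff using J(1) by blast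
  moreover have "Poly_Mapping.map \<pi> ((\<Sum>i\<in>{1..t}. H i * G i) + J) = p"
    by (simp add: p_eq J(2) H_def inv poly_mapping_map_add[OF hom] poly_mapping_map_sum[OF hom]
        poly_mapping_map_mult[OF hom])
  ultimately show ?thesis ..
qed

definition degree_below :: "nat \<Rightarrow> 'a::zero poly \<Rightarrow> bool" where
  "degree_below d p \<longleftrightarrow> (\<forall>i\<ge>d. coeff p i = 0)"

lemma degree_below_0 [simp]: "degree_below d 0"
  by (simp add: degree_below_def)

lemma degree_below_add: "degree_below d p \<Longrightarrow> degree_below d q \<Longrightarrow> degree_below d (p + q)"
  by (simp add: degree_below_def)

lemma degree_below_smult: "degree_below d p \<Longrightarrow> degree_below d (smult c (p::'a::comm_ring_1 poly))"
  by (simp add: degree_below_def)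

(* For monic T the library's pseudo-division is ordinary division with remainder. *)
definition monic_mod :: "'a::comm_ring_1 poly \<Rightarrow> 'a poly \<Rightarrow> 'a poly" where
  "monic_mod p T = snd (pseudo_divmod p T)"

context
  fixes T :: "'a::comm_ring_1 poly"
  assumes monic: "lead_coeff T = 1"
begin

lemma monic_mod_decomp: "\<exists>q. p = q * T + monic_mod p T"
  and degree_below_monic_mod: "degree_below (degree T) (monic_mod p T)"
proof -
  have "T \<noteq> 0" using monic by auto
  obtain q r where qr: "pseudo_divmod p T = (q, r)" by fastforce
  from pseudo_divmod[OF \<open>T \<noteq> 0\<close> qr] monic
  have "p = q * T + r" "r = 0 \<or> degree r < degree T" by (simp_all add: mult.commute)
  moreover have "monic_mod p T = r" using qr by (simp add: monic_mod_def)
  ultimately show "\<exists>q. p = q * T + monic_mod p T" "degree_below (degree T) (monic_mod p T)"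
    by (auto simp: degree_below_def coeff_eq_0)
qed

lemma monic_remainder_unique:
  assumes eq: "q1 * T + r1 = q2 * T + r2"
    and r: "degree_below (degree T) r1" "degree_below (degree T) r2"
  shows "r1 = r2"
proof -
  define D where "D = q1 - q2"
  have "D * T = r2 - r1" using eq by (simp add: D_def algebra_simps)
  then have "coeff (D * T) (degree D + degree T) = 0"
    using r by (simp add: degree_below_def)
  moreover have "coeff (D * T) (degree D + degree T) = lead_coeff D"
    using monic by (simp add: coeff_mult_degree_sum)
  ultimately have "D = 0" by simp
  then show ?thesis using eq by (simp add: D_def)
qed

lemma monic_mod_eqI: "p = q * T + r \<Longrightarrow> degree_below (degree T) r \<Longrightarrow> monic_mod p T = r"
  by (metis monic_mod_decomp degree_below_monic_mod monic_remainder_unique)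

lemma monic_mod_add: "monic_mod (p1 + p2) T = monic_mod p1 T + monic_mod p2 T"
proof -
  obtain q1 q2 where "p1 = q1 * T + monic_mod p1 T" "p2 = q2 * T + monic_mod p2 T"
    using monic_mod_decomp by metis
  then have "p1 + p2 = (q1 + q2) * T + (monic_mod p1 T + monic_mod p2 T)"
    by (simp add: algebra_simps)
  then show ?thesis
    by (rule monic_mod_eqI) (simp add: degree_below_add degree_below_monic_mod)
qed

lemma monic_mod_smult: "monic_mod (smult c p) T = smult c (monic_mod p T)"
proof -
  obtain q where "p = q * T + monic_mod p T"
    using monic_mod_decomp by metis
  then have "smult c p = smult c q * T + smult c (monic_mod p T)"
    by (metis smult_add_right mult_smult_left)
  then show ?thesis
    by (rule monic_mod_eqI) (simp add: degree_below_smult degree_below_monic_mod)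
qed

lemma monic_mod_sum: "monic_mod (sum f S) T = (\<Sum>i\<in>S. monic_mod (f i) T)"
  by (induction S rule: infinite_finite_induct)
     (auto simp: monic_mod_add monic_mod_eqI[of 0 0 0])

lemma monic_mod_mult_self: "monic_mod (p * T) T = 0"
  by (rule monic_mod_eqI[of _ p]) simp_all

end

section \<open>Normal forms modulo I\<close>

definition exponent_box :: "nat \<Rightarrow> (nat \<Rightarrow> nat) \<Rightarrow> (nat \<Rightarrow>\<^sub>0 nat) set" where
  "exponent_box r d = {m. Poly_Mapping.keys m \<subseteq> {..<r} \<and> (\<forall>k<r. Poly_Mapping.lookup m k < d k)}"

lemma reduced_iff_keys_subset: "reduced r ts p \<longleftrightarrow> Poly_Mapping.keys p \<subseteq> exponent_box r (\<lambda>k. degree (ts k))"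
  by (auto simp: reduced_def exponent_box_def)

lemma keys_prod_uni_to_mpoly:
  assumes "\<And>k. k < r \<Longrightarrow> degree_below (d k) (q k)"
  shows "Poly_Mapping.keys (\<Prod>k<r. uni_to_mpoly k (q k)) \<subseteq> exponent_box r d"
  using assms
proof (induction r)
  case 0
  then show ?case by (simp add: exponent_box_def)
next
  case (Suc r)
  show ?case
  proof
    fix m assume "m \<in> Poly_Mapping.keys (\<Prod>k<Suc r. uni_to_mpoly k (q k))"
    then have "m \<in> Poly_Mapping.keys ((\<Prod>k<r. uni_to_mpoly k (q k)) * uni_to_mpoly r (q r))"
      by simp
    then obtain x y where m: "m = x + y" and x: "x \<in> Poly_Mapping.keys (\<Prod>k<r. uni_to_mpoly k (q k))"
      and y: "y \<in> Poly_Mapping.keys (uni_to_mpoly r (q r))"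
      using keys_mult by blast
    have x_box: "x \<in> exponent_box r d" using Suc x by auto
    define j where "j = Poly_Mapping.lookup y r"
    have y_eq: "y = Poly_Mapping.single r j" and "coeff (q r) j \<noteq> 0"
      using keys_uni_to_mpoly[OF y] by (simp_all add: j_def)
    then have "j < d r"
      using Suc.prems[of r] by (auto simp: degree_below_def not_less[symmetric])
    have "Poly_Mapping.keys x \<union> Poly_Mapping.keys y \<subseteq> {..<Suc r}"
      using x_box by (auto simp: y_eq exponent_box_def)
    then have "Poly_Mapping.keys m \<subseteq> {..<Suc r}"
      using keys_add[of x y] unfolding m by blast
    moreover have "Poly_Mapping.lookup m k < d k" if "k < Suc r" for k
    proof (cases "k = r")
      case True
      then have "Poly_Mapping.lookup x k = 0"
        using x_box by (auto simp: exponent_box_def in_keys_iff)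
      with True show ?thesis using \<open>j < d r\<close> by (simp add: m y_eq lookup_add)
    next
      case False
      with that x_box show ?thesis by (simp add: m y_eq lookup_add lookup_single exponent_box_def)
    qed
    ultimately show "m \<in> exponent_box (Suc r) d"
      by (simp add: exponent_box_def)
  qed
qed

definition monomial_nf :: "nat \<Rightarrow> (nat \<Rightarrow> 'a::comm_ring_1 poly) \<Rightarrow> (nat \<Rightarrow>\<^sub>0 nat) \<Rightarrow> 'a mpoly" where
  "monomial_nf r ts m = (\<Prod>k<r. uni_to_mpoly k (monic_mod (monom 1 (Poly_Mapping.lookup m k)) (ts k)))"

definition normal_form :: "nat \<Rightarrow> (nat \<Rightarrow> 'a::comm_ring_1 poly) \<Rightarrow> 'a mpoly \<Rightarrow> 'a mpoly" where
  "normal_form r ts p = (\<Sum>m\<in>Poly_Mapping.keys p. const_mpoly (Poly_Mapping.lookup p m) * monomial_nf r ts m)"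

lemma normal_form_eq_sum:
  "finite S \<Longrightarrow> Poly_Mapping.keys p \<subseteq> S \<Longrightarrow>
   normal_form r ts p = (\<Sum>m\<in>S. const_mpoly (Poly_Mapping.lookup p m) * monomial_nf r ts m)"
  unfolding normal_form_def by (rule sum.mono_neutral_left) (auto simp: in_keys_iff)

lemma normal_form_add: "normal_form r ts (p + q) = normal_form r ts p + normal_form r ts q"
  using keys_add[of p q]
  by (simp add: normal_form_eq_sum[of "Poly_Mapping.keys p \<union> Poly_Mapping.keys q"]
      lookup_add const_mpoly_add sum.distrib distrib_right)

lemma normal_form_0 [simp]: "normal_form r ts 0 = 0"
  by (simp add: normal_form_def)

lemma normal_form_sum: "normal_form r ts (sum f S) = (\<Sum>i\<in>S. normal_form r ts (f i))"
  by (induction S rule: infinite_finite_induct) (auto simp: normal_form_add)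

lemma normal_form_const_mpoly_mult: "normal_form r ts (const_mpoly c * p) = const_mpoly c * normal_form r ts p"
proof -
  have "normal_form r ts (const_mpoly c * p) =
      (\<Sum>m\<in>Poly_Mapping.keys p. const_mpoly (Poly_Mapping.lookup (const_mpoly c * p) m) * monomial_nf r ts m)"
    by (rule normal_form_eq_sum) (simp_all add: keys_const_mpoly_mult_subset)
  then show ?thesis
    by (simp add: normal_form_def sum_distrib_left const_mpoly_mult mult.assoc)
qed

lemma normal_form_single: "normal_form r ts (Poly_Mapping.single m c) = const_mpoly c * monomial_nf r ts m"
  by (simp add: normal_form_eq_sum[of "{m}"])

context
  fixes r :: nat and ts :: "nat \<Rightarrow> 'a::comm_ring_1 poly"
  assumes monic: "\<And>k. k < r \<Longrightarrow> lead_coeff (ts k) = 1"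
begin

lemma reduced_normal_form: "reduced r ts (normal_form r ts p)"
proof -
  have "Poly_Mapping.keys (normal_form r ts p) \<subseteq> (\<Union>m\<in>Poly_Mapping.keys p. Poly_Mapping.keys (monomial_nf r ts m))"
    unfolding normal_form_def using keys_sum keys_const_mpoly_mult_subset by fastforce
  also have "\<dots> \<subseteq> exponent_box r (\<lambda>k. degree (ts k))"
    unfolding monomial_nf_def using degree_below_monic_mod monic
    by (intro UN_least keys_prod_uni_to_mpoly) blast
  finally show ?thesis by (simp add: reduced_iff_keys_subset)
qed

(* Only the k-th factor of monomial_nf changes; by linearity of the remainder these factors add
   up to the remainder of X_k^(m_k) t_k, which is 0. *)
lemma normal_form_single_mult_generator:
  assumes k: "k < r"
  shows "normal_form r ts (Poly_Mapping.single m 1 * uni_to_mpoly k (ts k)) = 0"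
proof -
  have monic_k: "lead_coeff (ts k) = 1" using monic k .
  define rem where "rem l n = monic_mod (monom 1 n) (ts l)" for l n
  define rest where "rest = (\<Prod>l\<in>{..<r}-{k}. uni_to_mpoly l (rem l (Poly_Mapping.lookup m l)))"
  have split: "monomial_nf r ts (m + Poly_Mapping.single k j) =
      uni_to_mpoly k (rem k (Poly_Mapping.lookup m k + j)) * rest" for j
  proof -
    have "(\<Prod>l\<in>{..<r}-{k}. uni_to_mpoly l (rem l (Poly_Mapping.lookup (m + Poly_Mapping.single k j) l))) = rest"
      unfolding rest_def by (rule prod.cong) (auto simp: lookup_add lookup_single)
    then show ?thesis
      unfolding monomial_nf_def rem_def[symmetric] using k
      by (simp add: prod.remove[of _ k] lookup_add)
  qed
  have "Poly_Mapping.single m 1 * uni_to_mpoly k (ts k) =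
      (\<Sum>j\<le>degree (ts k). Poly_Mapping.single (m + Poly_Mapping.single k j) (coeff (ts k) j))"
    by (simp add: uni_to_mpoly_def sum_distrib_left mult_single)
  then have "normal_form r ts (Poly_Mapping.single m 1 * uni_to_mpoly k (ts k)) =
      (\<Sum>j\<le>degree (ts k). const_mpoly (coeff (ts k) j) * monomial_nf r ts (m + Poly_Mapping.single k j))"
    by (simp add: normal_form_sum normal_form_single)
  also have "\<dots> = uni_to_mpoly k (\<Sum>j\<le>degree (ts k). smult (coeff (ts k) j) (rem k (Poly_Mapping.lookup m k + j))) * rest"
    by (simp add: split uni_to_mpoly_sum uni_to_mpoly_smult sum_distrib_right mult.assoc)
  also have "(\<Sum>j\<le>degree (ts k). smult (coeff (ts k) j) (rem k (Poly_Mapping.lookup m k + j))) =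
      monic_mod (monom 1 (Poly_Mapping.lookup m k) * ts k) (ts k)"
  proof -
    have "monom 1 (Poly_Mapping.lookup m k) * ts k =
        (\<Sum>j\<le>degree (ts k). smult (coeff (ts k) j) (monom 1 (Poly_Mapping.lookup m k + j)))"
      by (subst (1) poly_as_sum_of_monoms[of "ts k", symmetric])
         (simp add: sum_distrib_left mult_monom smult_monom)
    then show ?thesis
      by (simp add: monic_mod_sum[OF monic_k] monic_mod_smult[OF monic_k] rem_def)
  qed
  also have "\<dots> = 0" by (rule monic_mod_mult_self[OF monic_k])
  finally show ?thesis by simp
qed

lemma normal_form_ideal_I: "x \<in> ideal_I r ts \<Longrightarrow> normal_form r ts x = 0"
proof -
  have generator: "normal_form r ts (h * uni_to_mpoly k (ts k)) = 0" if "k < r" for h k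
  proof -
    have "h * uni_to_mpoly k (ts k) = (\<Sum>m\<in>Poly_Mapping.keys h.
        const_mpoly (Poly_Mapping.lookup h m) * (Poly_Mapping.single m 1 * uni_to_mpoly k (ts k)))"
      by (subst (1) poly_mapping_sum_single[of "Poly_Mapping.keys h" h, symmetric])
         (simp_all add: sum_distrib_right single_eq_const_mpoly_mult[of _ "Poly_Mapping.lookup h _"] mult.assoc)
    then show ?thesis
      by (simp add: normal_form_sum normal_form_const_mpoly_mult normal_form_single_mult_generator[OF that])
  qed
  show "x \<in> ideal_I r ts \<Longrightarrow> normal_form r ts x = 0"
    by (auto simp: ideal_I_iff normal_form_sum generator)
qed

lemma single_minus_monomial_nf_mem_ideal_I:
  assumes m: "Poly_Mapping.keys m \<subseteq> {..<r}"
  shows "Poly_Mapping.single m 1 - monomial_nf r ts m \<in> ideal_I r ts"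
proof -
  have "(\<Prod>k<r. uni_to_mpoly k (monom 1 (Poly_Mapping.lookup m k))) =
      Poly_Mapping.single (\<Sum>k<r. Poly_Mapping.single k (Poly_Mapping.lookup m k)) (1::'a)"
    by (induction r) (simp_all add: uni_to_mpoly_monom mult_single)
  also have "(\<Sum>k<r. Poly_Mapping.single k (Poly_Mapping.lookup m k)) = m"
    using m by (simp add: poly_mapping_sum_single)
  finally have "Poly_Mapping.single m 1 - monomial_nf r ts m =
      (\<Prod>k<r. uni_to_mpoly k (monom 1 (Poly_Mapping.lookup m k))) - monomial_nf r ts m" by simp
  also have "\<dots> \<in> ideal_I r ts"
    unfolding monomial_nf_def
  proof (rule mpoly_ideal_prod_diff[OF mpoly_ideal_ideal_I])
    fix k assume "k \<in> {..<r}"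
    then have k: "k < r" by simp
    obtain q where q: "monom 1 (Poly_Mapping.lookup m k) =
        q * ts k + monic_mod (monom 1 (Poly_Mapping.lookup m k)) (ts k)"
      using monic_mod_decomp[OF monic[OF k]] by blast
    have "uni_to_mpoly k (monom 1 (Poly_Mapping.lookup m k)) -
        uni_to_mpoly k (monic_mod (monom 1 (Poly_Mapping.lookup m k)) (ts k)) =
        uni_to_mpoly k q * uni_to_mpoly k (ts k)"
      by (subst q) (simp add: uni_to_mpoly_add uni_to_mpoly_mult)
    also have "\<dots> \<in> ideal_I r ts"
      using k by (intro mpoly_ideal_mult_left[OF mpoly_ideal_ideal_I] uni_to_mpoly_mem_ideal_I) simp_all
    finally show "uni_to_mpoly k (monom 1 (Poly_Mapping.lookup m k)) -
        uni_to_mpoly k (monic_mod (monom 1 (Poly_Mapping.lookup m k)) (ts k)) \<in> ideal_I r ts" .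
  qed simp_all
  finally show ?thesis .
qed

lemma minus_normal_form_mem_ideal_I:
  assumes p: "p \<in> mpolys r"
  shows "p - normal_form r ts p \<in> ideal_I r ts"
proof -
  have "p - normal_form r ts p = (\<Sum>m\<in>Poly_Mapping.keys p.
      const_mpoly (Poly_Mapping.lookup p m) * (Poly_Mapping.single m 1 - monomial_nf r ts m))"
    by (subst (1) poly_mapping_sum_single[of "Poly_Mapping.keys p" p, symmetric])
       (simp_all add: normal_form_def single_eq_const_mpoly_mult[of _ "Poly_Mapping.lookup p _"]
         sum_subtractf right_diff_distrib)
  also have "\<dots> \<in> ideal_I r ts"
    using p unfolding mpolys_iff
    by (intro mpoly_ideal_sum[OF mpoly_ideal_ideal_I] mpoly_ideal_mult_left[OF mpoly_ideal_ideal_I]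
        single_minus_monomial_nf_mem_ideal_I) auto
  finally show ?thesis .
qed

lemma diff_mem_ideal_I_if_normal_form_eq:
  assumes "p \<in> mpolys r" "q \<in> mpolys r" "normal_form r ts p = normal_form r ts q"
  shows "p - q \<in> ideal_I r ts"
proof -
  have "p - q = (p - normal_form r ts p) - (q - normal_form r ts q)"
    using assms(3) by simp
  also have "\<dots> \<in> ideal_I r ts"
    using assms by (intro mpoly_ideal_diff[OF mpoly_ideal_ideal_I] minus_normal_form_mem_ideal_I)
  finally show ?thesis .
qed

end

lemma finite_poly_mappings_bounded:
  assumes "finite B" "\<And>k. k \<in> B \<Longrightarrow> finite (V k)"
  shows "finite {p :: 'k \<Rightarrow>\<^sub>0 'v::zero. Poly_Mapping.keys p \<subseteq> B \<and> (\<forall>k\<in>B. Poly_Mapping.lookup p k \<in> V k)}"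
    (is "finite ?P")
proof -
  have inj: "inj_on (\<lambda>p. restrict (Poly_Mapping.lookup p) B) ?P"
  proof (rule inj_onI)
    fix p q assume "p \<in> ?P" "q \<in> ?P"
      and eq: "restrict (Poly_Mapping.lookup p) B = restrict (Poly_Mapping.lookup q) B"
    show "p = q"
    proof (rule poly_mapping_eqI)
      fix k
      show "Poly_Mapping.lookup p k = Poly_Mapping.lookup q k"
      proof (cases "k \<in> B")
        case True
        then show ?thesis using fun_cong[OF eq, of k] by simp
      next
        case False
        then have "k \<notin> Poly_Mapping.keys p" "k \<notin> Poly_Mapping.keys q"
          using \<open>p \<in> ?P\<close> \<open>q \<in> ?P\<close> by auto
        then show ?thesis by (simp add: in_keys_iff)
      qed
    qed
  qed
  have "(\<lambda>p. restrict (Poly_Mapping.lookup p) B) ` ?P \<subseteq> (\<Pi>\<^sub>E k\<in>B. V k)"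
    by auto
  then have "finite ((\<lambda>p. restrict (Poly_Mapping.lookup p) B) ` ?P)"
    by (rule finite_subset) (use assms in \<open>simp add: finite_PiE\<close>)
  then show ?thesis using inj by (rule finite_imageD)
qed

lemma finite_exponent_box: "finite (exponent_box r d)"
  using finite_poly_mappings_bounded[of "{..<r}" "\<lambda>k. {..<d k}"]
  by (simp add: exponent_box_def Ball_def)

lemma finite_reduced: "finite {p :: 'a::{comm_ring_1, finite} mpoly. reduced r ts p}"
proof -
  have "finite {p :: 'a mpoly. Poly_Mapping.keys p \<subseteq> exponent_box r (\<lambda>k. degree (ts k)) \<and>
      (\<forall>m\<in>exponent_box r (\<lambda>k. degree (ts k)). Poly_Mapping.lookup p m \<in> UNIV)}"
    by (rule finite_poly_mappings_bounded[OF finite_exponent_box]) simp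
  then show ?thesis by (simp add: reduced_iff_keys_subset)
qed

lemma hweight_le_card_exponent_box: "reduced r ts p \<Longrightarrow> hweight p \<le> card (exponent_box r (\<lambda>k. degree (ts k)))"
  unfolding hweight_def reduced_iff_keys_subset by (rule card_mono[OF finite_exponent_box])

lemma min_dist_eq_if_dominated:
  assumes CD: "\<And>c. c \<in> C \<Longrightarrow> c \<noteq> 0 \<Longrightarrow> reduced r ts c \<Longrightarrow>
      \<exists>d\<in>D. d \<noteq> 0 \<and> reduced r ts' d \<and> hweight d \<le> hweight c"
    and DC: "\<And>d. d \<in> D \<Longrightarrow> d \<noteq> 0 \<Longrightarrow> reduced r ts' d \<Longrightarrow>
      \<exists>c\<in>C. c \<noteq> 0 \<and> reduced r ts c \<and> hweight c \<le> hweight d"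
  shows "min_dist r ts C = min_dist r ts' D"
proof -
  define WC where "WC = {hweight p | p. p \<in> C \<and> p \<noteq> 0 \<and> reduced r ts p}"
  define WD where "WD = {hweight p | p. p \<in> D \<and> p \<noteq> 0 \<and> reduced r ts' p}"
  have "finite WC"
    by (rule finite_subset[of _ "{..card (exponent_box r (\<lambda>k. degree (ts k)))}"])
       (auto simp: WC_def dest: hweight_le_card_exponent_box)
  have "finite WD"
    by (rule finite_subset[of _ "{..card (exponent_box r (\<lambda>k. degree (ts' k)))}"])
       (auto simp: WD_def dest: hweight_le_card_exponent_box)
  have CD': "\<exists>y\<in>WD. y \<le> x" if "x \<in> WC" for x
    using that CD unfolding WC_def WD_def by blast
  have DC': "\<exists>x\<in>WC. x \<le> y" if "y \<in> WD" for y
    using that DC unfolding WC_def WD_def by blast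
  show ?thesis
  proof (cases "WC = {}")
    case True
    then have "WD = {}" using DC' by blast
    with True show ?thesis by (simp add: min_dist_def WC_def[symmetric] WD_def[symmetric])
  next
    case False
    then have "WD \<noteq> {}" using CD' by blast
    have "Min WD \<le> Min WC"
      using CD'[OF Min_in[OF \<open>finite WC\<close> False]] Min_le[OF \<open>finite WD\<close>] by (meson order_trans)
    moreover have "Min WC \<le> Min WD"
      using DC'[OF Min_in[OF \<open>finite WD\<close> \<open>WD \<noteq> {}\<close>]] Min_le[OF \<open>finite WC\<close>] by (meson order_trans)
    ultimately show ?thesis
      using False \<open>WD \<noteq> {}\<close> by (simp add: min_dist_def WC_def[symmetric] WD_def[symmetric])
  qed
qed

section \<open>The chain ring\<close>

locale chain_ring_residue =
  fixes a :: "'r::comm_ring_1" and t :: nat and \<pi> :: "'r \<Rightarrow> 'f::field"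
  assumes maximal: "maximal_ideal (principal a)"
    and nilpotent: "a ^ t = 0" and index: "a ^ (t - 1) \<noteq> 0"
    and hom: "ring_hom_cl \<pi>" and kernel: "{x. \<pi> x = 0} = principal a"
begin

lemma t_pos: "t \<ge> 1"
  using nilpotent index by (cases t) auto

lemma unit_if_not_in_principal:
  assumes x: "x \<notin> principal a"
  shows "\<exists>z. x * z = 1"
proof -
  define J where "J = {a * y + x * z | y z. True}"
  have "is_ideal J"
    unfolding is_ideal_def J_def
  proof (intro conjI ballI allI)
    show "0 \<in> {a * y + x * z |y z. True}" by (intro CollectI exI[of _ 0]) simp
  next
    fix u v assume "u \<in> {a * y + x * z |y z. True}" "v \<in> {a * y + x * z |y z. True}"
    then obtain y1 z1 y2 z2 where "u = a * y1 + x * z1" "v = a * y2 + x * z2" by blast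
    then have "u + v = a * (y1 + y2) + x * (z1 + z2)" by (simp add: algebra_simps)
    then show "u + v \<in> {a * y + x * z |y z. True}" by blast
  next
    fix u w assume "u \<in> {a * y + x * z |y z. True}"
    then obtain y z where "u = a * y + x * z" by blast
    then have "w * u = a * (w * y) + x * (w * z)" by (simp add: algebra_simps)
    then show "w * u \<in> {a * y + x * z |y z. True}" by blast
  qed
  moreover have "principal a \<subseteq> J"
  proof
    fix u assume "u \<in> principal a"
    then obtain y where "u = a * y + x * 0" unfolding principal_def by auto
    then show "u \<in> J" unfolding J_def by blast
  qed
  moreover have "x = a * 0 + x * 1" by simp
  then have "J \<noteq> principal a"
    using x unfolding J_def by blast
  ultimately have "J = UNIV"
    using maximal unfolding maximal_ideal_def by blast
  then have "1 \<in> J" by simp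
  then obtain y z where "1 = a * y + x * z"
    unfolding J_def by blast
  then have yz: "x * z = 1 - a * y"
    by (simp add: eq_diff_eq add.commute)
  have "(1 - a * y) * (\<Sum>i<t. (a * y) ^ i) = 1 - (a * y) ^ t"
    by (simp add: one_diff_power_eq)
  also have "\<dots> = 1"
    using nilpotent by (simp add: power_mult_distrib)
  finally have "(1 - a * y) * (\<Sum>i<t. (a * y) ^ i) = 1" .
  then have "x * (z * (\<Sum>i<t. (a * y) ^ i)) = 1"
    by (simp add: yz mult.assoc[symmetric])
  then show ?thesis ..
qed

lemma top_power_mult_eq_0_iff: "a ^ (t - 1) * x = 0 \<longleftrightarrow> \<pi> x = 0"
proof
  assume "a ^ (t - 1) * x = 0"
  show "\<pi> x = 0"
  proof (rule ccontr)
    assume "\<pi> x \<noteq> 0"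
    then obtain z where "x * z = 1"
      using kernel unit_if_not_in_principal by blast
    then have "a ^ (t - 1) = a ^ (t - 1) * x * z" by (simp add: mult.assoc)
    with \<open>a ^ (t - 1) * x = 0\<close> index show False by simp
  qed
next
  assume "\<pi> x = 0"
  then obtain y where "x = a * y"
    using kernel unfolding principal_def by blast
  then have "a ^ (t - 1) * x = a ^ t * y"
    using t_pos by (simp add: mult.assoc[symmetric] power_Suc2[symmetric])
  with nilpotent show "a ^ (t - 1) * x = 0" by simp
qed

lemma top_power_divides_if_mult_a_eq_0:
  assumes "a * x = 0"
  shows "\<exists>y. x = a ^ (t - 1) * y"
proof (cases "x = 0")
  case True
  then show ?thesis by (intro exI[of _ 0]) simp
next
  case False
  have "\<not> (\<exists>y. x = a ^ t * y)" using False nilpotent by simp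
  moreover have "\<not> \<not> (\<exists>y. x = a ^ 0 * y)" by simp
  ultimately obtain k where "k < t" "\<forall>i\<le>k. \<not> \<not> (\<exists>y. x = a ^ i * y)" "\<not> (\<exists>y. x = a ^ Suc k * y)"
    using ex_least_nat_less[of "\<lambda>i. \<not> (\<exists>y. x = a ^ i * y)" t] by blast
  then obtain y where y: "x = a ^ k * y" by blast
  have "y \<notin> principal a"
  proof
    assume "y \<in> principal a"
    then obtain y' where "y = a * y'" unfolding principal_def by blast
    with y have "x = a ^ Suc k * y'" by (simp add: mult_ac)
    with \<open>\<not> (\<exists>y. x = a ^ Suc k * y)\<close> show False by blast
  qed
  then obtain z where z: "y * z = 1" using unit_if_not_in_principal by blast
  have "a ^ Suc k = a ^ Suc k * y * z" by (simp add: z mult.assoc)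
  also have "\<dots> = 0" using assms y by (simp add: mult.assoc mult.left_commute)
  finally have "a ^ Suc k = 0" .
  moreover have "a ^ (t - 1) = a ^ Suc k * a ^ (t - 1 - Suc k)" if "Suc k \<le> t - 1"
    using that by (metis le_add_diff_inverse power_add)
  ultimately have "k = t - 1"
    using index \<open>k < t\<close> by (cases "Suc k \<le> t - 1") auto
  with y show ?thesis by blast
qed

lemma keys_top_power_mult:
  "Poly_Mapping.keys (const_mpoly (a ^ (t - 1)) * Y) = Poly_Mapping.keys (Poly_Mapping.map \<pi> Y)"
  unfolding set_eq_iff in_keys_iff lookup_const_mpoly_mult lookup_map_hom[OF hom] top_power_mult_eq_0_iff
  by simp

lemma top_power_mult_eq_0_iff_map: "const_mpoly (a ^ (t - 1)) * Y = 0 \<longleftrightarrow> Poly_Mapping.map \<pi> Y = 0"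
  by (metis keys_top_power_mult keys_eq_empty)

lemma top_power_divides_if_const_a_mult_eq_0:
  assumes "const_mpoly a * c = 0"
  shows "\<exists>Y. c = const_mpoly (a ^ (t - 1)) * Y \<and> Poly_Mapping.keys Y \<subseteq> Poly_Mapping.keys c"
proof -
  define quot where "quot x = (SOME y. x = a ^ (t - 1) * y)" for x
  have quot: "a ^ (t - 1) * quot (Poly_Mapping.lookup c m) = Poly_Mapping.lookup c m" for m
  proof -
    have "a * Poly_Mapping.lookup c m = 0"
      using assms by (simp add: const_mpoly_mult_eq_0_iff)
    then have "\<exists>y. Poly_Mapping.lookup c m = a ^ (t - 1) * y"
      by (rule top_power_divides_if_mult_a_eq_0)
    then show ?thesis unfolding quot_def by (metis (mono_tags, lifting) someI_ex)
  qed
  show ?thesis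
  proof (intro exI conjI)
    show "c = const_mpoly (a ^ (t - 1)) * Poly_Mapping.map quot c"
      by (rule poly_mapping_eqI) (use quot in \<open>simp add: lookup_map\<close>)
  qed (rule keys_map_subset)
qed

lemma map_mem_ideal_I_if_top_power_mult_mem:
  assumes monic: "\<And>k. k < r \<Longrightarrow> lead_coeff (ts k) = 1"
    and z: "z \<in> mpolys r" and az: "const_mpoly (a ^ (t - 1)) * z \<in> ideal_I r ts"
  shows "Poly_Mapping.map \<pi> z \<in> ideal_I r (\<lambda>k. map_poly \<pi> (ts k))"
proof -
  have "const_mpoly (a ^ (t - 1)) * normal_form r ts z = 0"
    using normal_form_ideal_I[OF monic az] by (simp add: normal_form_const_mpoly_mult)
  then have "Poly_Mapping.map \<pi> (normal_form r ts z) = 0"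
    by (simp only: top_power_mult_eq_0_iff_map)
  then have "Poly_Mapping.map \<pi> z = Poly_Mapping.map \<pi> (z - normal_form r ts z)"
    by (simp add: poly_mapping_map_diff[OF hom])
  also have "\<dots> \<in> ideal_I r (\<lambda>k. map_poly \<pi> (ts k))"
    using monic z by (intro map_mem_ideal_I[OF hom] minus_normal_form_mem_ideal_I)
  finally show ?thesis .
qed

end

locale admissible_family =
  fixes r :: nat and ts :: "nat \<Rightarrow> 'a::{comm_ring_1, finite} poly"
    and t :: nat and G :: "nat \<Rightarrow> 'a mpoly"
  assumes monic: "\<And>k. k < r \<Longrightarrow> lead_coeff (ts k) = 1"
    and G_in: "\<And>i. i \<le> t \<Longrightarrow> G i \<in> mpolys r"
    and ann_Inter: "(\<Inter>i\<in>{0..t}. ann r ts (G i)) = ideal_I r ts"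
    and ann_comaximal: "\<And>i j. i \<le> t \<Longrightarrow> j \<le> t \<Longrightarrow> i \<noteq> j \<Longrightarrow>
        \<exists>u v. u \<in> ann r ts (G i) \<and> v \<in> ann r ts (G j) \<and> u + v - 1 \<in> ideal_I r ts"
begin

lemma mem_ideal_I_if_annihilates_all:
  assumes "y \<in> mpolys r" "\<And>i. i \<le> t \<Longrightarrow> y * G i \<in> ideal_I r ts"
  shows "y \<in> ideal_I r ts"
  using assms ann_Inter by (auto simp: ann_def)

(* The product, over i \<noteq> j, of elements F_i \<in> Ann(G_i) with F_i - 1 \<in> Ann(G_j). *)
lemma exists_separator:
  assumes j: "j \<le> t"
  shows "\<exists>u\<in>mpolys r. (\<forall>i\<le>t. i \<noteq> j \<longrightarrow> u * G i \<in> ideal_I r ts) \<and> u * G j - G j \<in> ideal_I r ts"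
proof -
  have "\<exists>f. f \<in> ann r ts (G i) \<and> f - 1 \<in> ann r ts (G j)" if i: "i \<le> t" "i \<noteq> j" for i
  proof -
    obtain u v where uv: "u \<in> ann r ts (G i)" "v \<in> ann r ts (G j)" "u + v - 1 \<in> ideal_I r ts"
      using ann_comaximal[OF i(1) j i(2)] by blast
    have "(u - 1) * G j = (u + v - 1) * G j - v * G j" by (simp add: algebra_simps)
    also have "\<dots> \<in> ideal_I r ts"
      using uv(2) by (intro mpoly_ideal_diff[OF mpoly_ideal_ideal_I]
          mpoly_ideal_mult_right[OF mpoly_ideal_ideal_I G_in[OF j] uv(3)]) (simp add: ann_def)
    finally have "u - 1 \<in> ann r ts (G j)"
      using uv(1) by (simp add: ann_def)
    with uv(1) show ?thesis by blast
  qed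
  then obtain F where F: "\<And>i. i \<le> t \<Longrightarrow> i \<noteq> j \<Longrightarrow> F i \<in> ann r ts (G i) \<and> F i - 1 \<in> ann r ts (G j)"
    by metis
  define u where "u = prod F ({0..t} - {j})"
  have "u - prod (\<lambda>_. 1) ({0..t} - {j}) \<in> ann r ts (G j)"
    unfolding u_def using F by (intro mpoly_ideal_prod_diff[OF mpoly_ideal_ann]) (auto simp: ann_def)
  then have u1: "u - 1 \<in> ann r ts (G j)" by simp
  have "u * G i \<in> ideal_I r ts" if "i \<le> t" "i \<noteq> j" for i
  proof -
    have "u * G i = prod F ({0..t} - {j} - {i}) * (F i * G i)"
      unfolding u_def using that by (simp add: prod.remove[of _ i] algebra_simps)
    also have "\<dots> \<in> ideal_I r ts"
      using F that by (intro mpoly_ideal_mult_left[OF mpoly_ideal_ideal_I, OF mpolys_prod]) (auto simp: ann_def)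
    finally show ?thesis .
  qed
  moreover have "u * G j - G j \<in> ideal_I r ts"
    using u1 by (simp add: ann_def left_diff_distrib)
  moreover have "u \<in> mpolys r"
    unfolding u_def using F by (intro mpolys_prod) (auto simp: ann_def)
  ultimately show ?thesis by blast
qed

lemma exists_separators:
  obtains u where "\<And>j. j \<le> t \<Longrightarrow> u j \<in> mpolys r"
    and "\<And>i j. i \<le> t \<Longrightarrow> j \<le> t \<Longrightarrow> i \<noteq> j \<Longrightarrow> u j * G i \<in> ideal_I r ts"
    and "(\<Sum>j\<in>{0..t}. u j) - 1 \<in> ideal_I r ts"
proof -
  obtain u where u_mpolys: "\<And>j. j \<le> t \<Longrightarrow> u j \<in> mpolys r"
    and u_others: "\<And>i j. i \<le> t \<Longrightarrow> j \<le> t \<Longrightarrow> i \<noteq> j \<Longrightarrow> u j * G i \<in> ideal_I r ts"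
    and u_self: "\<And>j. j \<le> t \<Longrightarrow> u j * G j - G j \<in> ideal_I r ts"
    using exists_separator by metis
  have "(\<Sum>j\<in>{0..t}. u j) - 1 \<in> ideal_I r ts"
  proof (rule mem_ideal_I_if_annihilates_all)
    show "(\<Sum>j\<in>{0..t}. u j) - 1 \<in> mpolys r" by (intro mpolys_diff mpolys_sum mpolys_1 u_mpolys) simp
    show "((\<Sum>j\<in>{0..t}. u j) - 1) * G i \<in> ideal_I r ts" if i: "i \<le> t" for i
    proof -
      have "((\<Sum>j\<in>{0..t}. u j) - 1) * G i = (u i * G i - G i) + (\<Sum>j\<in>{0..t} - {i}. u j * G i)"
        using i by (simp add: sum.remove[of _ i] sum_distrib_left sum_distrib_right algebra_simps)
      also have "\<dots> \<in> ideal_I r ts"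
        using i u_self u_others
        by (intro mpoly_ideal_add[OF mpoly_ideal_ideal_I] mpoly_ideal_sum[OF mpoly_ideal_ideal_I]) auto
      finally show ?thesis .
    qed
  qed
  with u_mpolys u_others show ?thesis using that by blast
qed

lemma mem_ideal_I_if_power_mult_mem:
  assumes j: "j \<le> t" and x: "x \<in> mpolys r"
    and others: "\<And>i. i \<le> t \<Longrightarrow> i \<noteq> j \<Longrightarrow> x * G i \<in> ideal_I r ts"
    and power: "x * G j ^ n \<in> ideal_I r ts"
  shows "x \<in> ideal_I r ts"
  using power
proof (induction n)
  case (Suc n)
  have "x * G j ^ n \<in> ideal_I r ts"
  proof (rule mem_ideal_I_if_annihilates_all)
    show "x * G j ^ n \<in> mpolys r" using x G_in[OF j] by simp
    show "x * G j ^ n * G i \<in> ideal_I r ts" if "i \<le> t" for i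
    proof (cases "i = j")
      case True
      with Suc.prems show ?thesis by (metis mult.assoc power_Suc2)
    next
      case False
      have "x * G j ^ n * G i = G j ^ n * (x * G i)" by (simp add: algebra_simps)
      also have "\<dots> \<in> ideal_I r ts"
        using G_in[OF j] others[OF that False] by (rule mpoly_ideal_mult_left[OF mpoly_ideal_ideal_I, OF mpolys_power])
      finally show ?thesis .
    qed
  qed
  then show ?case by (rule Suc.IH)
qed simp

(* As A is finite, u G_j^n and u G_j^(n+k) agree modulo I for some n and k > 0; then
   x = u (1 - G_j^k) satisfies x G_j^n \<in> I and kills the other G_i, so x \<in> I. *)
lemma exists_multiple_of_generator:
  assumes j: "j \<le> t" and u: "u \<in> mpolys r"
    and others: "\<And>i. i \<le> t \<Longrightarrow> i \<noteq> j \<Longrightarrow> u * G i \<in> ideal_I r ts"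
  shows "\<exists>w\<in>mpolys r. u - w * G j \<in> ideal_I r ts"
proof -
  have Gj: "G j \<in> mpolys r" using G_in[OF j] .
  define f where "f n = normal_form r ts (u * G j ^ n)" for n
  have "range f \<subseteq> {p. reduced r ts p}"
    unfolding f_def using reduced_normal_form[of r ts, OF monic] by blast
  then have "finite (range f)"
    by (rule finite_subset) (rule finite_reduced)
  then have "\<not> inj f"
    using infinite_UNIV_nat finite_imageD by blast
  then obtain n0 n1 where "n0 \<noteq> n1" "f n0 = f n1"
    unfolding inj_def by blast
  define n n' where "n = min n0 n1" and "n' = max n0 n1"
  have "n < n'" "f n = f n'"
    using \<open>n0 \<noteq> n1\<close> \<open>f n0 = f n1\<close> by (auto simp: n_def n'_def min_def max_def)
  define k where "k = n' - n"
  define x where "x = u - u * G j ^ k"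
  have "G j ^ k * G j ^ n = G j ^ n'"
    using \<open>n < n'\<close> by (simp add: k_def flip: power_add)
  then have "x * G j ^ n = u * G j ^ n - u * G j ^ n'"
    by (simp add: x_def left_diff_distrib mult.assoc)
  also have "\<dots> \<in> ideal_I r ts"
    using \<open>f n = f n'\<close> u Gj unfolding f_def by (intro diff_mem_ideal_I_if_normal_form_eq[of r ts, OF monic]) simp_all
  finally have "x * G j ^ n \<in> ideal_I r ts" .
  moreover have "x * G i \<in> ideal_I r ts" if "i \<le> t" "i \<noteq> j" for i
  proof -
    have "x * G i = (1 - G j ^ k) * (u * G i)" by (simp add: x_def algebra_simps)
    also have "\<dots> \<in> ideal_I r ts"
      using Gj others[OF that] by (intro mpoly_ideal_mult_left[OF mpoly_ideal_ideal_I, OF mpolys_diff]) simp_all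
    finally show ?thesis .
  qed
  ultimately have "x \<in> ideal_I r ts"
    using u Gj by (intro mem_ideal_I_if_power_mult_mem[OF j, of x]) (simp_all add: x_def)
  moreover have "G j ^ k = G j ^ (k - 1) * G j"
    using \<open>n < n'\<close> by (cases k) (simp_all add: k_def mult.commute)
  then have "x = u - (u * G j ^ (k - 1)) * G j"
    by (simp add: x_def mult.assoc)
  ultimately show ?thesis
    using u Gj by (intro bexI[of _ "u * G j ^ (k - 1)"]) simp_all
qed

end

section \<open>Comparing K with L\<close>

locale chain_ring_admissible_family =
  chain_ring_residue a t \<pi> + admissible_family r ts t G
  for a :: "'r::{comm_ring_1, finite}" and t :: nat and \<pi> :: "'r \<Rightarrow> 'f::field"
    and r :: nat and ts :: "nat \<Rightarrow> 'r poly" and G :: "nat \<Rightarrow> 'r mpoly" +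
  assumes surj: "surj \<pi>"
begin

abbreviation code_K :: "'r mpoly set" where
  "code_K \<equiv> gen_code r ts t (\<lambda>i. const_mpoly (a ^ (i - 1)) * G i)"

abbreviation code_L :: "'f mpoly set" where
  "code_L \<equiv> gen_code r (\<lambda>k. map_poly \<pi> (ts k)) t (\<lambda>i. Poly_Mapping.map \<pi> (G i))"

lemma reduced_residue_iff:
  "reduced r (\<lambda>k. map_poly \<pi> (ts k)) p \<longleftrightarrow> Poly_Mapping.keys p \<subseteq> exponent_box r (\<lambda>k. degree (ts k))"
  unfolding reduced_iff_keys_subset exponent_box_def using degree_map_poly_monic[OF hom monic] by simp

lemma map_mem_code_L_if_mem_ideal_I: "x \<in> ideal_I r ts \<Longrightarrow> Poly_Mapping.map \<pi> x \<in> code_L"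
  by (rule ideal_I_subset_gen_code[OF map_mem_ideal_I[OF hom]])

lemma map_mult_mem_code_L_if_kills_generators:
  assumes Y: "Y \<in> mpolys r" and aY: "const_mpoly (a ^ (t - 1)) * Y \<in> code_K"
    and u: "u \<in> mpolys r" and kills: "\<And>i. i \<in> {1..t} \<Longrightarrow> u * G i \<in> ideal_I r ts"
  shows "Poly_Mapping.map \<pi> (u * Y) \<in> code_L"
proof -
  have "u * (const_mpoly (a ^ (t - 1)) * Y) \<in> ideal_I r ts"
  proof (rule mult_mem_ideal_I_if_kills_generators[OF u _ aY])
    fix i assume "i \<in> {1..t}"
    then have "const_mpoly (a ^ (i - 1)) * (u * G i) \<in> ideal_I r ts"
      by (intro mpoly_ideal_mult_left[OF mpoly_ideal_ideal_I mpolys_const] kills)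
    then show "u * (const_mpoly (a ^ (i - 1)) * G i) \<in> ideal_I r ts"
      by (simp add: mult.left_commute)
  qed
  then have "Poly_Mapping.map \<pi> (u * Y) \<in> ideal_I r (\<lambda>k. map_poly \<pi> (ts k))"
    using u Y by (intro map_mem_ideal_I_if_top_power_mult_mem[OF monic]) (simp_all add: mult.left_commute)
  then show ?thesis
    by (rule ideal_I_subset_gen_code)
qed

lemma map_mult_mem_code_L_if_kills_others:
  assumes j: "j \<in> {1..t}" and Y: "Y \<in> mpolys r" and u: "u \<in> mpolys r"
    and others: "\<And>i. i \<le> t \<Longrightarrow> i \<noteq> j \<Longrightarrow> u * G i \<in> ideal_I r ts"
  shows "Poly_Mapping.map \<pi> (u * Y) \<in> code_L"
proof -
  obtain w where w: "w \<in> mpolys r" "u - w * G j \<in> ideal_I r ts"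
    using exists_multiple_of_generator[of j u] j u others by auto
  have "u * Y = (w * Y) * G j + (u - w * G j) * Y" by (simp add: algebra_simps)
  then have "Poly_Mapping.map \<pi> (u * Y) =
      Poly_Mapping.map \<pi> (w * Y) * Poly_Mapping.map \<pi> (G j) + Poly_Mapping.map \<pi> ((u - w * G j) * Y)"
    by (simp add: poly_mapping_map_add[OF hom] poly_mapping_map_mult[OF hom])
  also have "\<dots> \<in> code_L"
    using w Y j
    by (intro mpoly_ideal_add[OF mpoly_ideal_gen_code] gen_code_generator mpolys_map[OF hom]
        map_mem_code_L_if_mem_ideal_I mpoly_ideal_mult_right[OF mpoly_ideal_ideal_I]) simp_all
  finally show ?thesis .
qed

lemma map_mem_code_L_if_top_power_mult_mem_code_K:
  assumes Y: "Y \<in> mpolys r" and aY: "const_mpoly (a ^ (t - 1)) * Y \<in> code_K"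
  shows "Poly_Mapping.map \<pi> Y \<in> code_L"
proof -
  obtain u where u_mpolys: "\<And>j. j \<le> t \<Longrightarrow> u j \<in> mpolys r"
    and u_others: "\<And>i j. i \<le> t \<Longrightarrow> j \<le> t \<Longrightarrow> i \<noteq> j \<Longrightarrow> u j * G i \<in> ideal_I r ts"
    and u_sum: "(\<Sum>j\<in>{0..t}. u j) - 1 \<in> ideal_I r ts"
    using exists_separators by blast
  have "Y = u 0 * Y + (\<Sum>j\<in>{1..t}. u j * Y) - ((\<Sum>j\<in>{0..t}. u j) - 1) * Y"
    by (simp add: sum.atLeast_Suc_atMost sum_distrib_left sum_distrib_right algebra_simps)
  then have "Poly_Mapping.map \<pi> Y = Poly_Mapping.map \<pi> (u 0 * Y) + (\<Sum>j\<in>{1..t}. Poly_Mapping.map \<pi> (u j * Y))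
      - Poly_Mapping.map \<pi> (((\<Sum>j\<in>{0..t}. u j) - 1) * Y)"
    by (metis poly_mapping_map_add[OF hom] poly_mapping_map_diff[OF hom] poly_mapping_map_sum[OF hom])
  also have "\<dots> \<in> code_L"
  proof (intro mpoly_ideal_diff[OF mpoly_ideal_gen_code] mpoly_ideal_add[OF mpoly_ideal_gen_code]
      mpoly_ideal_sum[OF mpoly_ideal_gen_code])
    show "Poly_Mapping.map \<pi> (u 0 * Y) \<in> code_L"
      using u_mpolys u_others by (intro map_mult_mem_code_L_if_kills_generators[OF Y aY]) auto
    show "Poly_Mapping.map \<pi> (u j * Y) \<in> code_L" if "j \<in> {1..t}" for j
      using that u_mpolys u_others by (intro map_mult_mem_code_L_if_kills_others[OF that Y]) auto
    show "Poly_Mapping.map \<pi> (((\<Sum>j\<in>{0..t}. u j) - 1) * Y) \<in> code_L"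
      by (rule map_mem_code_L_if_mem_ideal_I[OF mpoly_ideal_mult_right[OF mpoly_ideal_ideal_I Y u_sum]])
  qed
  finally show ?thesis .
qed

lemma top_power_mult_mem_code_K_if_map_mem_code_L:
  assumes "Poly_Mapping.map \<pi> Y \<in> code_L"
  shows "const_mpoly (a ^ (t - 1)) * Y \<in> code_K"
proof -
  obtain X where X: "X \<in> gen_code r ts t G" "Poly_Mapping.map \<pi> X = Poly_Mapping.map \<pi> Y"
    using gen_code_map_preimage[OF hom surj assms] by blast
  then have "Poly_Mapping.map \<pi> (Y - X) = 0"
    by (simp add: poly_mapping_map_diff[OF hom])
  then have "const_mpoly (a ^ (t - 1)) * (Y - X) = 0"
    by (simp only: top_power_mult_eq_0_iff_map)
  then have "const_mpoly (a ^ (t - 1)) * Y = const_mpoly (a ^ (t - 1)) * X"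
    by (simp add: right_diff_distrib)
  also have "\<dots> \<in> code_K"
    by (rule top_power_mult_mem_gen_code[OF X(1)])
  finally show ?thesis .
qed

lemma code_L_word_lifts:
  assumes p: "p \<in> code_L" "p \<noteq> 0" "reduced r (\<lambda>k. map_poly \<pi> (ts k)) p"
  shows "\<exists>c\<in>code_K. c \<noteq> 0 \<and> reduced r ts c \<and> hweight c \<le> hweight p"
proof -
  define Y where "Y = Poly_Mapping.map (inv \<pi>) p"
  have map_Y: "Poly_Mapping.map \<pi> Y = p"
    unfolding Y_def by (rule map_map_inv[OF surj ring_hom_cl_0[OF hom]])
  define c where "c = const_mpoly (a ^ (t - 1)) * Y"
  have "c \<in> code_K"
    unfolding c_def by (rule top_power_mult_mem_code_K_if_map_mem_code_L) (simp add: map_Y p(1))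
  moreover have keys_c: "Poly_Mapping.keys c = Poly_Mapping.keys p"
    unfolding c_def keys_top_power_mult map_Y ..
  moreover have "c \<noteq> 0"
    using keys_c p(2) by (metis keys_eq_empty)
  moreover have "reduced r ts c"
    unfolding reduced_iff_keys_subset keys_c using p(3) by (simp only: reduced_residue_iff)
  ultimately show ?thesis
    by (intro bexI[of _ c]) (simp_all add: hweight_def)
qed

lemma code_K_word_descends:
  assumes c: "c \<in> code_K" "c \<noteq> 0" "reduced r ts c"
  shows "\<exists>p\<in>code_L. p \<noteq> 0 \<and> reduced r (\<lambda>k. map_poly \<pi> (ts k)) p \<and> hweight p \<le> hweight c"
proof -
  \<comment> \<open>s is the largest exponent with a^s c \<noteq> 0, so c' = a^s c is killed by a.\<close>
  have "const_mpoly (a ^ t) * c = 0" by (simp add: nilpotent)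
  moreover have "const_mpoly (a ^ 0) * c \<noteq> 0" using c by simp
  ultimately obtain s where "const_mpoly (a ^ s) * c \<noteq> 0" "const_mpoly (a ^ Suc s) * c = 0"
    using ex_least_nat_less[of "\<lambda>s. const_mpoly (a ^ s) * c = 0" t] by blast
  define c' where "c' = const_mpoly (a ^ s) * c"
  have "const_mpoly a * c' = 0"
    using \<open>const_mpoly (a ^ Suc s) * c = 0\<close> by (simp add: c'_def const_mpoly_mult mult.assoc)
  then obtain Y where Y: "c' = const_mpoly (a ^ (t - 1)) * Y" "Poly_Mapping.keys Y \<subseteq> Poly_Mapping.keys c'"
    using top_power_divides_if_const_a_mult_eq_0 by blast
  have keys_c': "Poly_Mapping.keys c' \<subseteq> Poly_Mapping.keys c"
    unfolding c'_def by (rule keys_const_mpoly_mult_subset)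
  have box: "Poly_Mapping.keys c \<subseteq> exponent_box r (\<lambda>k. degree (ts k))"
    using c(3) by (simp only: reduced_iff_keys_subset)
  have "Y \<in> mpolys r"
    using Y(2) keys_c' box by (auto simp: exponent_box_def mpolys_iff)
  moreover have "c' \<in> code_K"
    unfolding c'_def by (rule mpoly_ideal_mult_left[OF mpoly_ideal_gen_code mpolys_const c(1)])
  ultimately have "Poly_Mapping.map \<pi> Y \<in> code_L"
    unfolding Y(1) by (rule map_mem_code_L_if_top_power_mult_mem_code_K)
  moreover have keys_p: "Poly_Mapping.keys (Poly_Mapping.map \<pi> Y) = Poly_Mapping.keys c'"
    unfolding Y(1) by (rule keys_top_power_mult[symmetric])
  moreover have "Poly_Mapping.map \<pi> Y \<noteq> 0"
    using keys_p \<open>const_mpoly (a ^ s) * c \<noteq> 0\<close> by (metis c'_def keys_eq_empty)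
  ultimately show ?thesis
    using keys_c' box
    by (intro bexI[of _ "Poly_Mapping.map \<pi> Y"])
       (auto simp: hweight_def reduced_residue_iff intro: card_mono)
qed

lemma min_dist_code_K_eq_code_L:
  "min_dist r ts code_K = min_dist r (\<lambda>k. map_poly \<pi> (ts k)) code_L"
  by (rule min_dist_eq_if_dominated[OF code_K_word_descends code_L_word_lifts])

end

theorem mainTheorem7:
  fixes a :: "'r::{comm_ring_1, finite}"
    and t :: nat
    and \<pi> :: "'r \<Rightarrow> 'f::field"
    and r :: nat
    and ts :: "nat \<Rightarrow> 'r poly"
    and G :: "nat \<Rightarrow> 'r mpoly"
    and K :: "'r mpoly set"
  assumes chain: "chain_ring TYPE('r)"
    and max: "maximal_ideal (principal a)"
    and nilp: "t \<ge> 1" "a ^ t = 0" "a ^ (t - 1) \<noteq> 0"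
    and residue: "ring_hom_cl \<pi>" "surj \<pi>" "{x. \<pi> x = 0} = principal a"
    and monic: "\<And>k. k < r \<Longrightarrow> lead_coeff (ts k) = 1"
    and sqfree: "\<And>k. k < r \<Longrightarrow> squarefree (map_poly \<pi> (ts k))"
    and G_in: "\<And>i. i \<le> t \<Longrightarrow> G i \<in> mpolys r"
    and adm_inter: "(\<Inter>i\<in>{0..t}. ann r ts (G i)) = ideal_I r ts"
    and adm_comax: "\<And>i j. i \<le> t \<Longrightarrow> j \<le> t \<Longrightarrow> i \<noteq> j \<Longrightarrow>
        \<exists>u v. u \<in> ann r ts (G i) \<and> v \<in> ann r ts (G j) \<and> u + v - 1 \<in> ideal_I r ts"
    and K_def: "K = gen_code r ts t (\<lambda>i. const_mpoly (a ^ (i - 1)) * G i)"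
  shows "min_dist r ts K =
         min_dist r (\<lambda>k. map_poly \<pi> (ts k))
           (gen_code r (\<lambda>k. map_poly \<pi> (ts k)) t (\<lambda>i. Poly_Mapping.map \<pi> (G i)))"
proof -
  interpret chain_ring_admissible_family a t \<pi> r ts G
    by unfold_locales (use max nilp residue monic G_in adm_inter adm_comax in auto)
  show ?thesis
    unfolding K_def by (rule min_dist_code_K_eq_code_L)
qed

end
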